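(* Let $G$ be a graph on $[n]$ and $p$ in the Shearer region $\mathcal S$ of $G$. Then for all $A,B\subseteq[n]$, $q_A(p)\,q_B(p)\ge q_{A\cup B}(p)\,q_{A\cap B}(p)$.
   Context: Shearer notation: $\mathrm{Ind}$ is the family of independent sets of $G$ (including $\emptyset$); for $p\in\mathbb R^n$ and $I\subseteq[n]$, $p^I=\prod_{i\in I}p_i$. For $S\subseteq[n]$, $q_S(p)=\sum_{I\in\mathrm{Ind},\,S\subseteq I}(-1)^{|I\setminus S|}p^I$ (so $q_S=0$ if $S\notin\mathrm{Ind}$) and $\breve q_S(p)=\sum_{I\in\mathrm{Ind},\,I\subseteq S}(-1)^{|I|}p^I$. The Shearer region is $\mathcal S=\{p\in(0,1)^n:\breve q_S(p)>0\ \forall S\subseteq[n]\}$, which equals $\{p\in(0,1)^n: q_I(p)>0\ \forall I\in\mathrm{Ind}\}$. *)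

theory Defs
  imports Complex_Main
begin

text \<open>A (simple) graph on [n] = {1..n}: a symmetric irreflexive adjacency relation E.
  Only the restriction of E to {1..n} matters.\<close>
definition is_graph :: "nat \<Rightarrow> (nat \<Rightarrow> nat \<Rightarrow> bool) \<Rightarrow> bool" where
  "is_graph n E \<longleftrightarrow> (\<forall>i\<in>{1..n}. \<forall>j\<in>{1..n}. E i j \<longrightarrow> E j i) \<and> (\<forall>i\<in>{1..n}. \<not> E i i)"

definition Ind :: "nat \<Rightarrow> (nat \<Rightarrow> nat \<Rightarrow> bool) \<Rightarrow> nat set set" where
  "Ind n E = {I. I \<subseteq> {1..n} \<and> (\<forall>i\<in>I. \<forall>j\<in>I. \<not> E i j)}"

definition q :: "nat \<Rightarrow> (nat \<Rightarrow> nat \<Rightarrow> bool) \<Rightarrow> nat set \<Rightarrow> (nat \<Rightarrow> real) \<Rightarrow> real" where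
  "q n E S p = (\<Sum>I\<in>{I\<in>Ind n E. S \<subseteq> I}. (-1) ^ card (I - S) * (\<Prod>i\<in>I. p i))"

definition q_breve :: "nat \<Rightarrow> (nat \<Rightarrow> nat \<Rightarrow> bool) \<Rightarrow> nat set \<Rightarrow> (nat \<Rightarrow> real) \<Rightarrow> real" where
  "q_breve n E S p = (\<Sum>I\<in>{I\<in>Ind n E. I \<subseteq> S}. (-1) ^ card I * (\<Prod>i\<in>I. p i))"

text \<open>Shearer region: p in (0,1)^n with breve q_S(p) > 0 for all S \<subseteq> [n].
  Vectors p in R^n are functions nat => real; only values on {1..n} matter.\<close>
definition shearer_region :: "nat \<Rightarrow> (nat \<Rightarrow> nat \<Rightarrow> bool) \<Rightarrow> (nat \<Rightarrow> real) set" where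
  "shearer_region n E = {p. (\<forall>i\<in>{1..n}. 0 < p i \<and> p i < 1) \<and>
                            (\<forall>S. S \<subseteq> {1..n} \<longrightarrow> q_breve n E S p > 0)}"

end

(*
  For independent S, q_S(p) = p^S * Z([n] - N[S]), where Z(X) is the independence polynomial
  of G[X] evaluated at -p and N[S] is the closed neighbourhood of S. Since
  [n] - N[A \<union> B] is the intersection of [n] - N[A] and [n] - N[B], and [n] - N[A \<inter> B]
  contains their union, the claim follows once Z is antitone and log-submodular on subsets
  of [n]. In the Shearer region Z is positive on these sets, and the recurrence
  Z(X + v) = Z(X) - p_v Z(X - N(v)) yields both: it gives antitonicity directly, and it turns
  the one-vertex inequality Z(T + v) Z(S) \<le> Z(S + v) Z(T) for S \<subseteq> T into the same
  inequality for the smaller pair X - N(v) \<subseteq> X, so it holds by induction on |T|;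
  log-submodularity then follows by adding the vertices of Y - X one at a time.
*)

theory Submission
  imports Defs
begin

definition indep :: "('a \<Rightarrow> 'a \<Rightarrow> bool) \<Rightarrow> 'a set \<Rightarrow> bool" where
  "indep E I \<longleftrightarrow> (\<forall>i\<in>I. \<forall>j\<in>I. \<not> E i j)"

definition nbhd :: "('a \<Rightarrow> 'a \<Rightarrow> bool) \<Rightarrow> 'a \<Rightarrow> 'a set" where
  "nbhd E v = {u. E u v \<or> E v u}"

definition closed_nbhd :: "('a \<Rightarrow> 'a \<Rightarrow> bool) \<Rightarrow> 'a set \<Rightarrow> 'a set" where
  "closed_nbhd E S = S \<union> (\<Union>s\<in>S. nbhd E s)"

definition neg_indep_poly :: "('a \<Rightarrow> 'a \<Rightarrow> bool) \<Rightarrow> ('a \<Rightarrow> real) \<Rightarrow> 'a set \<Rightarrow> real" where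
  "neg_indep_poly E p X = (\<Sum>I\<in>{I. I \<subseteq> X \<and> indep E I}. (-1) ^ card I * (\<Prod>i\<in>I. p i))"

lemma neg_indep_poly_insert:
  assumes fin: "finite X" and "v \<notin> X" and "\<not> E v v"
  shows "neg_indep_poly E p (insert v X) = neg_indep_poly E p X - p v * neg_indep_poly E p (X - nbhd E v)"
proof -
  let ?F = "\<lambda>I. (-1::real) ^ card I * (\<Prod>i\<in>I. p i)"
  let ?A = "{I. I \<subseteq> X \<and> indep E I}"
  let ?B = "{J. J \<subseteq> X - nbhd E v \<and> indep E J}"
  have split: "{I. I \<subseteq> insert v X \<and> indep E I} = ?A \<union> insert v ` ?B"
  proof (rule set_eqI, rule iffI)
    fix I assume I: "I \<in> {I. I \<subseteq> insert v X \<and> indep E I}"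
    show "I \<in> ?A \<union> insert v ` ?B"
    proof (cases "v \<in> I")
      case True
      then have "I = insert v (I - {v})" and "I - {v} \<in> ?B"
        using I by (auto simp: indep_def nbhd_def)
      then show ?thesis by blast
    qed (use I in auto)
  next
    fix I assume "I \<in> ?A \<union> insert v ` ?B"
    then show "I \<in> {I. I \<subseteq> insert v X \<and> indep E I}"
      using assms(3) by (auto simp: indep_def nbhd_def)
  qed
  have fin_A: "finite ?A" and fin_B: "finite ?B"
    using fin by (auto intro: finite_subset[of _ "Pow X"])
  have inj: "inj_on (insert v) ?B"
    using assms(2) by (auto intro!: inj_onI)
  have "neg_indep_poly E p (insert v X) = sum ?F ?A + sum ?F (insert v ` ?B)"
    unfolding neg_indep_poly_def split
    by (rule sum.union_disjoint) (use fin_A fin_B assms(2) in auto)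
  also have "sum ?F (insert v ` ?B) = sum (\<lambda>J. - (p v * ?F J)) ?B"
    unfolding sum.reindex[OF inj]
  proof (rule sum.cong)
    fix J assume "J \<in> ?B"
    then have "finite J" "v \<notin> J" using fin assms(2) finite_subset by auto
    then show "(?F \<circ> insert v) J = - (p v * ?F J)" by simp
  qed simp
  finally show ?thesis
    unfolding neg_indep_poly_def by (simp add: sum_negf sum_distrib_left)
qed

text \<open>The chain \<open>a / b \<le> d / c \<le> e / s\<close> with denominators cleared.\<close>

lemma cross_mult_le_trans:
  fixes a b c d e s :: real
  assumes "0 < c" "0 \<le> s" "0 \<le> b" "a * c \<le> b * d" "d * s \<le> e * c"
  shows "a * s \<le> b * e"
proof -
  have "(a * s) * c = (a * c) * s" by simp
  also have "\<dots> \<le> (b * d) * s" using assms by (simp add: mult_right_mono)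
  also have "\<dots> = b * (d * s)" by simp
  also have "\<dots> \<le> b * (e * c)" using assms by (simp add: mult_left_mono)
  also have "\<dots> = (b * e) * c" by simp
  finally show ?thesis using assms(1) by simp
qed

lemma insert_ratio_antimono_from_steps:
  fixes f :: "'a set \<Rightarrow> real"
  assumes "finite T" "S \<subseteq> T"
    and pos: "\<And>X. X \<subseteq> T \<Longrightarrow> 0 < f X"
    and step: "\<And>w X. S \<subseteq> X \<Longrightarrow> insert w X \<subseteq> T \<Longrightarrow> w \<notin> X \<Longrightarrow>
                 f (insert v (insert w X)) * f X \<le> f (insert v X) * f (insert w X)"
  shows "f (insert v T) * f S \<le> f (insert v S) * f T"
proof -
  have "f (insert v (S \<union> D)) * f S \<le> f (insert v S) * f (S \<union> D)" if "finite D" "D \<subseteq> T - S" for D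
    using that
  proof (induction D rule: finite_subset_induct')
    case (insert w D)
    let ?X = "S \<union> D"
    have X: "?X \<subseteq> T" "insert w ?X \<subseteq> T" "w \<notin> ?X"
      using insert assms(2) by auto
    have "f (insert v (insert w ?X)) * f ?X \<le> f (insert w ?X) * f (insert v ?X)"
      using step[OF _ X(2,3)] by (simp add: mult.commute)
    from cross_mult_le_trans[OF pos[OF X(1)] _ _ this insert.IH]
    have "f (insert v (insert w ?X)) * f S \<le> f (insert w ?X) * f (insert v S)"
      using pos[OF assms(2)] pos[OF X(2)] by simp
    then show ?case by (simp add: mult.commute)
  qed simp
  from this[of "T - S"] show ?thesis
    using assms(1,2) by (simp add: Un_absorb1)
qed

lemma log_submodular_from_insert:
  fixes f :: "'a set \<Rightarrow> real"
  assumes "finite V" and pos: "\<And>X. X \<subseteq> V \<Longrightarrow> 0 < f X"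
    and ins: "\<And>S T v. S \<subseteq> T \<Longrightarrow> T \<subseteq> V \<Longrightarrow> v \<in> V - T \<Longrightarrow>
                f (insert v T) * f S \<le> f (insert v S) * f T"
    and "X \<subseteq> V" "Y \<subseteq> V"
  shows "f (X \<union> Y) * f (X \<inter> Y) \<le> f X * f Y"
proof -
  let ?C = "X \<inter> Y"
  have "f (X \<union> D) * f ?C \<le> f X * f (?C \<union> D)" if "finite D" "D \<subseteq> V - X" for D
    using that
  proof (induction D rule: finite_subset_induct')
    case (insert w D)
    have sub: "?C \<union> D \<subseteq> X \<union> D" "X \<union> D \<subseteq> V" "insert w (?C \<union> D) \<subseteq> V" "?C \<subseteq> V"
      using insert assms(4) by auto
    have "f (insert w (X \<union> D)) * f (?C \<union> D) \<le> f (insert w (?C \<union> D)) * f (X \<union> D)"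
      using insert by (intro ins[OF sub(1,2)]) auto
    from cross_mult_le_trans[OF pos[OF sub(1)[THEN order_trans, OF sub(2)]] _ _ this insert.IH]
    have "f (insert w (X \<union> D)) * f ?C \<le> f (insert w (?C \<union> D)) * f X"
      using pos[OF sub(3)] pos[OF sub(4)] by simp
    then show ?case by (simp add: mult.commute)
  qed simp
  from this[of "Y - X"] have "f (X \<union> (Y - X)) * f ?C \<le> f X * f (?C \<union> (Y - X))"
    using assms(1,5) finite_subset by blast
  moreover have "X \<union> (Y - X) = X \<union> Y" "?C \<union> (Y - X) = Y" by blast+
  ultimately show ?thesis by simp
qed

locale shearer_positive =
  fixes V :: "'a set" and E :: "'a \<Rightarrow> 'a \<Rightarrow> bool" and p :: "'a \<Rightarrow> real"
  assumes finite_V: "finite V"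
    and irrefl: "\<And>v. v \<in> V \<Longrightarrow> \<not> E v v"
    and p_nonneg: "\<And>v. v \<in> V \<Longrightarrow> 0 \<le> p v"
    and neg_indep_poly_pos: "\<And>X. X \<subseteq> V \<Longrightarrow> 0 < neg_indep_poly E p X"
begin

abbreviation Z :: "'a set \<Rightarrow> real" where
  "Z \<equiv> neg_indep_poly E p"

lemma Z_insert:
  "X \<subseteq> V \<Longrightarrow> v \<in> V - X \<Longrightarrow> Z (insert v X) = Z X - p v * Z (X - nbhd E v)"
  using finite_V irrefl by (intro neg_indep_poly_insert) (auto intro: finite_subset)

lemma Z_antimono:
  assumes "S \<subseteq> T" "T \<subseteq> V"
  shows "Z T \<le> Z S"
proof -
  have extend: "Z (S \<union> D) \<le> Z S" if "finite D" "D \<subseteq> T - S" for D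
    using that
  proof (induction D rule: finite_subset_induct')
    case (insert w D)
    have "Z (insert w (S \<union> D)) = Z (S \<union> D) - p w * Z (S \<union> D - nbhd E w)"
      using insert assms by (intro Z_insert) auto
    moreover have "0 \<le> p w * Z (S \<union> D - nbhd E w)"
      using insert assms by (intro mult_nonneg_nonneg p_nonneg less_imp_le[OF neg_indep_poly_pos]) auto
    ultimately show ?case using insert.IH by simp
  qed simp
  have "finite (T - S)" using assms finite_V finite_subset by blast
  then show ?thesis using extend[of "T - S"] assms by (simp add: Un_absorb1)
qed

lemma Z_insert_ratio_antimono:
  "S \<subseteq> T \<Longrightarrow> T \<subseteq> V \<Longrightarrow> v \<in> V - T \<Longrightarrow> Z (insert v T) * Z S \<le> Z (insert v S) * Z T"
proof (induction "card T" arbitrary: S T v rule: less_induct)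
  case less
  have T: "finite T" using less.prems finite_V finite_subset by blast
  show ?case
  proof (rule insert_ratio_antimono_from_steps[OF T \<open>S \<subseteq> T\<close>])
    fix X assume "X \<subseteq> T"
    then show "0 < Z X" using less.prems by (intro neg_indep_poly_pos) auto
  next
    fix w X assume wX: "insert w X \<subseteq> T" "w \<notin> X"
    have X: "X \<subseteq> V" "insert w X \<subseteq> V" "v \<in> V - X" "v \<in> V - insert w X"
      using wX less.prems by auto
    have cross: "Z (X - nbhd E v) * Z (insert w X) \<le> Z (insert w X - nbhd E v) * Z X"
    proof (cases "w \<in> nbhd E v")
      case True
      then have "insert w X - nbhd E v = X - nbhd E v" by auto
      moreover have "Z (insert w X) \<le> Z X" using X by (intro Z_antimono) auto
      moreover have "0 < Z (X - nbhd E v)" using X by (intro neg_indep_poly_pos) auto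
      ultimately show ?thesis by (simp add: mult_left_mono)
    next
      case False
      then have "insert w X - nbhd E v = insert w (X - nbhd E v)" by auto
      moreover have "card X < card T"
        using wX T by (intro psubset_card_mono) auto
      ultimately show ?thesis
        using less.hyps[of X "X - nbhd E v" w] X wX by (auto simp: mult.commute)
    qed
    have "Z (insert v (insert w X)) * Z X
        = Z (insert w X) * Z X - p v * (Z (insert w X - nbhd E v) * Z X)"
      unfolding Z_insert[OF X(2,4)] by (simp add: algebra_simps)
    also have "\<dots> \<le> Z (insert w X) * Z X - p v * (Z (X - nbhd E v) * Z (insert w X))"
      using cross p_nonneg[of v] X by (simp add: mult_left_mono)
    also have "\<dots> = Z (insert v X) * Z (insert w X)"
      unfolding Z_insert[OF X(1,3)] by (simp add: algebra_simps)
    finally show "Z (insert v (insert w X)) * Z X \<le> Z (insert v X) * Z (insert w X)" .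
  qed
qed

lemma Z_log_submodular: "X \<subseteq> V \<Longrightarrow> Y \<subseteq> V \<Longrightarrow> Z (X \<union> Y) * Z (X \<inter> Y) \<le> Z X * Z Y"
  by (rule log_submodular_from_insert[of V Z, OF finite_V neg_indep_poly_pos Z_insert_ratio_antimono])

lemma Z_mult_inter_le:
  assumes "X \<union> Y \<subseteq> W" "W \<subseteq> V"
  shows "Z W * Z (X \<inter> Y) \<le> Z X * Z Y"
proof -
  have "Z W \<le> Z (X \<union> Y)" and "0 < Z (X \<inter> Y)"
    using assms by (auto intro: Z_antimono neg_indep_poly_pos)
  then have "Z W * Z (X \<inter> Y) \<le> Z (X \<union> Y) * Z (X \<inter> Y)"
    by (simp add: mult_right_mono)
  also have "\<dots> \<le> Z X * Z Y"
    using assms by (intro Z_log_submodular) auto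
  finally show ?thesis .
qed

end

lemma closed_nbhd_Un: "closed_nbhd E (A \<union> B) = closed_nbhd E A \<union> closed_nbhd E B"
  unfolding closed_nbhd_def by blast

lemma closed_nbhd_mono: "A \<subseteq> B \<Longrightarrow> closed_nbhd E A \<subseteq> closed_nbhd E B"
  unfolding closed_nbhd_def by blast

lemma Ind_iff: "S \<in> Ind n E \<longleftrightarrow> S \<subseteq> {1..n} \<and> indep E S"
  unfolding Ind_def indep_def by blast

lemma q_breve_eq_neg_indep_poly: "X \<subseteq> {1..n} \<Longrightarrow> q_breve n E X p = neg_indep_poly E p X"
  unfolding q_breve_def neg_indep_poly_def Ind_iff by (rule sum.cong) auto

lemma shearer_positive_if_shearer_region:
  assumes "is_graph n E" "p \<in> shearer_region n E"
  shows "shearer_positive {1..n} E p"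
  using assms by unfold_locales
    (auto simp: is_graph_def shearer_region_def q_breve_eq_neg_indep_poly less_imp_le)

lemma q_not_Ind:
  assumes "S \<notin> Ind n E"
  shows "q n E S p = 0"
proof -
  have "{I \<in> Ind n E. S \<subseteq> I} = {}" using assms unfolding Ind_def by blast
  then show ?thesis unfolding q_def by (simp only: sum.empty)
qed

lemma q_Ind:
  assumes "S \<in> Ind n E"
  shows "q n E S p = (\<Prod>i\<in>S. p i) * neg_indep_poly E p ({1..n} - closed_nbhd E S)"
proof -
  let ?F = "\<lambda>I. (-1::real) ^ card (I - S) * (\<Prod>i\<in>I. p i)"
  let ?U = "{1..n} - closed_nbhd E S"
  let ?B = "{J. J \<subseteq> ?U \<and> indep E J}"
  have S: "S \<subseteq> {1..n}" "indep E S" "finite S"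
    using assms finite_subset by (auto simp: Ind_iff)
  have extensions: "{I \<in> Ind n E. S \<subseteq> I} = (\<union>) S ` ?B"
  proof (rule set_eqI, rule iffI)
    fix I assume I: "I \<in> {I \<in> Ind n E. S \<subseteq> I}"
    then have "I = S \<union> (I - S)" and "I - S \<in> ?B"
      by (auto simp: Ind_iff indep_def closed_nbhd_def nbhd_def)
    then show "I \<in> (\<union>) S ` ?B" by blast
  next
    fix I assume "I \<in> (\<union>) S ` ?B"
    then show "I \<in> {I \<in> Ind n E. S \<subseteq> I}"
      using S by (auto simp: Ind_iff indep_def closed_nbhd_def nbhd_def)
  qed
  have inj: "inj_on ((\<union>) S) ?B"
    by (rule inj_onI) (auto simp: closed_nbhd_def)
  have "q n E S p = sum (?F \<circ> (\<union>) S) ?B"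
    unfolding q_def extensions by (rule sum.reindex[OF inj])
  also have "\<dots> = (\<Sum>J\<in>?B. (\<Prod>i\<in>S. p i) * ((-1) ^ card J * (\<Prod>i\<in>J. p i)))"
  proof (rule sum.cong)
    fix J assume J: "J \<in> ?B"
    then have "finite J" "S \<inter> J = {}"
      using finite_subset[of J "{1..n}"] by (auto simp: closed_nbhd_def)
    then show "(?F \<circ> (\<union>) S) J = (\<Prod>i\<in>S. p i) * ((-1) ^ card J * (\<Prod>i\<in>J. p i))"
      using prod.union_disjoint[OF S(3), of J p] by (simp add: Un_Diff Diff_triv Int_commute)
  qed simp
  finally show ?thesis
    unfolding neg_indep_poly_def by (simp add: sum_distrib_left)
qed

lemma q_nonneg:
  assumes "shearer_positive {1..n} E p"
  shows "0 \<le> q n E S p"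
proof (cases "S \<in> Ind n E")
  case True
  interpret shearer_positive "{1..n}" E p by fact
  have "0 \<le> (\<Prod>i\<in>S. p i)"
    using True by (auto intro!: prod_nonneg p_nonneg simp: Ind_iff)
  moreover have "0 < Z ({1..n} - closed_nbhd E S)" by (intro neg_indep_poly_pos) auto
  ultimately show ?thesis using q_Ind[OF True] by simp
qed (simp add: q_not_Ind)

lemma q_Un_mult_q_Int_le:
  assumes "shearer_positive {1..n} E p" and "A \<union> B \<in> Ind n E"
  shows "q n E (A \<union> B) p * q n E (A \<inter> B) p \<le> q n E A p * q n E B p"
proof -
  interpret shearer_positive "{1..n}" E p by fact
  have ind: "A \<in> Ind n E" "B \<in> Ind n E" "A \<inter> B \<in> Ind n E" and AB: "A \<subseteq> {1..n}" "B \<subseteq> {1..n}"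
    using assms(2) by (auto simp: Ind_iff indep_def)
  let ?U = "\<lambda>S. {1..n} - closed_nbhd E S"
  have "Z (?U (A \<inter> B)) * Z (?U A \<inter> ?U B) \<le> Z (?U A) * Z (?U B)"
    using closed_nbhd_mono[of "A \<inter> B" A E] closed_nbhd_mono[of "A \<inter> B" B E]
    by (intro Z_mult_inter_le) auto
  then have Z_le: "Z (?U (A \<union> B)) * Z (?U (A \<inter> B)) \<le> Z (?U A) * Z (?U B)"
    by (simp add: closed_nbhd_Un Diff_Un mult.commute)
  have prod_eq: "(\<Prod>i\<in>A \<union> B. p i) * (\<Prod>i\<in>A \<inter> B. p i) = (\<Prod>i\<in>A. p i) * (\<Prod>i\<in>B. p i)"
    using AB by (intro prod.union_inter) (auto intro: finite_subset)
  have "0 \<le> (\<Prod>i\<in>A. p i) * (\<Prod>i\<in>B. p i)"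
    using AB by (auto intro!: mult_nonneg_nonneg prod_nonneg p_nonneg)
  have "q n E (A \<union> B) p * q n E (A \<inter> B) p
      = ((\<Prod>i\<in>A. p i) * (\<Prod>i\<in>B. p i)) * (Z (?U (A \<union> B)) * Z (?U (A \<inter> B)))"
    unfolding q_Ind[OF assms(2)] q_Ind[OF ind(3)] prod_eq[symmetric] by (simp add: algebra_simps)
  also have "\<dots> \<le> ((\<Prod>i\<in>A. p i) * (\<Prod>i\<in>B. p i)) * (Z (?U A) * Z (?U B))"
    by (rule mult_left_mono[OF Z_le]) fact
  also have "\<dots> = q n E A p * q n E B p"
    unfolding q_Ind[OF ind(1)] q_Ind[OF ind(2)] by (simp add: algebra_simps)
  finally show ?thesis .
qed

theorem mainTheorem11:
  fixes n :: nat and E :: "nat \<Rightarrow> nat \<Rightarrow> bool" and p :: "nat \<Rightarrow> real"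
    and A B :: "nat set"
  assumes "is_graph n E"
    and "p \<in> shearer_region n E"
    and "A \<subseteq> {1..n}" and "B \<subseteq> {1..n}"
  shows "q n E A p * q n E B p \<ge> q n E (A \<union> B) p * q n E (A \<inter> B) p"
proof -
  have pos: "shearer_positive {1..n} E p"
    using assms(1,2) by (rule shearer_positive_if_shearer_region)
  show ?thesis
  proof (cases "A \<union> B \<in> Ind n E")
    case True
    then show ?thesis using q_Un_mult_q_Int_le[OF pos] by simp
  next
    case False
    then show ?thesis using q_nonneg[OF pos, of A] q_nonneg[OF pos, of B] by (simp add: q_not_Ind)
  qed
qed

end
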